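(* Let $a<b$ be real numbers and $I=[a,b]$. There is a constant $\varepsilon_0>0$ such that for every $0<\varepsilon<\varepsilon_0$ there exist piecewise continuous functions $q_1,q_2$ on $I$ and an interval $I_\varepsilon\subset(a,b)$ of length $\varepsilon$ such that $q_1(t)\le q_2(t)$ for all $t\in I\setminus I_\varepsilon$ and $q_1(t)>q_2(t)$ for all $t\in I_\varepsilon$, and for which Sturm's comparison theorem fails on $I$; that is, the equation $u''+q_1(t)u=0$ has a solution $u$ with $u(a)=u(b)=0$ and $u(t)\neq0$ for $t\in(a,b)$, while the equation $v''+q_2(t)v=0$ has a solution $v$ with $v(t)\neq 0$ for all $t\in[a,b]$.
   Context: All coefficient functions are piecewise continuous on $I$, and "solution" always means a nontrivial (not identically zero) solution. *)

theory Defs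
  imports "HOL-Analysis.Analysis"
begin

definition piecewise_continuous_on :: "real \<Rightarrow> real \<Rightarrow> (real \<Rightarrow> real) \<Rightarrow> bool" where
  "piecewise_continuous_on a b q \<longleftrightarrow>
     (\<exists>S. finite S \<and> continuous_on ({a..b} - S) q) \<and>
     (\<forall>x\<in>{a..b}. (a < x \<longrightarrow> (\<exists>l. (q \<longlongrightarrow> l) (at_left x))) \<and>
                   (x < b \<longrightarrow> (\<exists>l. (q \<longlongrightarrow> l) (at_right x))))"

definition is_solution_on :: "real \<Rightarrow> real \<Rightarrow> (real \<Rightarrow> real) \<Rightarrow> (real \<Rightarrow> real) \<Rightarrow> bool" where
  "is_solution_on a b q u \<longleftrightarrow>
     (\<exists>u'. (\<forall>t\<in>{a..b}. (u has_real_derivative u' t) (at t within {a..b})) \<and>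
           continuous_on {a..b} u' \<and>
           (\<exists>S. finite S \<and> (\<forall>t\<in>{a..b} - S.
                 (u' has_real_derivative (- q t * u t)) (at t within {a..b})))) \<and>
     (\<exists>t\<in>{a..b}. u t \<noteq> 0)"

end

theory Submission
  imports Defs
begin

text \<open>Take \<open>q\<^sub>2 = 0\<close> and \<open>v = 1\<close>. For \<open>q\<^sub>1\<close>, start from the tent function
  \<open>L - \<bar>t - m\<bar>\<close> (distance to the boundary of \<open>[a, b] = [m - L, m + L]\<close>) and round off its
  corner by a parabola on \<open>[m - \<delta>, m + \<delta>]\<close>, \<open>2\<delta> = \<epsilon>\<close>. The resulting \<open>u\<close> is \<open>C\<^sup>1\<close>,
  positive inside and zero at \<open>a\<close> and \<open>b\<close>, with \<open>u'' = -1/\<delta>\<close> on \<open>(m - \<delta>, m + \<delta>)\<close> and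
  \<open>u'' = 0\<close> elsewhere. So \<open>u\<close> solves \<open>u'' + q\<^sub>1 u = 0\<close> for the potential \<open>q\<^sub>1 = 1/(\<delta> u)\<close> on
  \<open>[m - \<delta>, m + \<delta>]\<close> and \<open>q\<^sub>1 = 0\<close> outside, which exceeds \<open>q\<^sub>2\<close> exactly on that interval.\<close>

lemma bump_has_left_limit:
  fixes h :: "real \<Rightarrow> real"
  assumes h: "\<And>t. t \<in> {c..d} \<Longrightarrow> isCont h t"
  shows "\<exists>l. ((\<lambda>t. if t \<in> {c..d} then h t else 0) \<longlongrightarrow> l) (at_left x)"
proof (cases "c < x \<and> x \<le> d")
  case True
  have "eventually (\<lambda>y. y \<in> {c<..<x}) (at_left x)"
    using True by (intro eventually_at_left_real) auto
  then have "eventually (\<lambda>y. h y = (if y \<in> {c..d} then h y else 0)) (at_left x)"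
    by eventually_elim (use True in auto)
  moreover have "(h \<longlongrightarrow> h x) (at_left x)"
    using h[of x] True by (simp add: filterlim_at_split isCont_def)
  ultimately show ?thesis
    by (blast intro: Lim_transform_eventually)
next
  case False
  have "eventually (\<lambda>y. y < x) (at_left x)"
    by (simp add: eventually_at_filter)
  moreover have "eventually (\<lambda>y. d < y) (at_left x)" if "d < x"
    using eventually_at_left_real[OF that] by eventually_elim auto
  ultimately have "eventually (\<lambda>y. y \<notin> {c..d}) (at_left x)"
    using False by (cases "d < x") (auto elim: eventually_mono)
  then have "eventually (\<lambda>y. 0 = (if y \<in> {c..d} then h y else 0)) (at_left x)"
    by eventually_elim auto
  then show ?thesis
    by (blast intro: Lim_transform_eventually tendsto_const)
qed

lemma bump_has_right_limit:
  fixes h :: "real \<Rightarrow> real"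
  assumes h: "\<And>t. t \<in> {c..d} \<Longrightarrow> isCont h t"
  shows "\<exists>l. ((\<lambda>t. if t \<in> {c..d} then h t else 0) \<longlongrightarrow> l) (at_right x)"
proof (cases "c \<le> x \<and> x < d")
  case True
  have "eventually (\<lambda>y. y \<in> {x<..<d}) (at_right x)"
    using True by (intro eventually_at_right_real) auto
  then have "eventually (\<lambda>y. h y = (if y \<in> {c..d} then h y else 0)) (at_right x)"
    by eventually_elim (use True in auto)
  moreover have "(h \<longlongrightarrow> h x) (at_right x)"
    using h[of x] True by (simp add: filterlim_at_split isCont_def)
  ultimately show ?thesis
    by (blast intro: Lim_transform_eventually)
next
  case False
  have "eventually (\<lambda>y. x < y) (at_right x)"
    by (simp add: eventually_at_filter)
  moreover have "eventually (\<lambda>y. y < c) (at_right x)" if "x < c"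
    using eventually_at_right_real[OF that] by eventually_elim auto
  ultimately have "eventually (\<lambda>y. y \<notin> {c..d}) (at_right x)"
    using False by (cases "x < c") (auto elim: eventually_mono)
  then have "eventually (\<lambda>y. 0 = (if y \<in> {c..d} then h y else 0)) (at_right x)"
    by eventually_elim auto
  then show ?thesis
    by (blast intro: Lim_transform_eventually tendsto_const)
qed

lemma piecewise_continuous_on_bump:
  fixes h :: "real \<Rightarrow> real"
  assumes h: "\<And>t. t \<in> {c..d} \<Longrightarrow> isCont h t"
  shows "piecewise_continuous_on a b (\<lambda>t. if t \<in> {c..d} then h t else 0)"
    (is "piecewise_continuous_on a b ?q")
proof -
  have "isCont ?q x" if "x \<notin> {c, d}" for x
  proof (cases "x \<in> {c..d}")
    case True
    then have "eventually (\<lambda>y. y \<in> {c<..<d}) (nhds x)"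
      using that by (intro eventually_nhds_in_open) auto
    then have "eventually (\<lambda>y. ?q y = h y) (nhds x)"
      by eventually_elim auto
    then show ?thesis
      using isCont_cong h[of x] True by fast
  next
    case False
    then have "eventually (\<lambda>y. y \<in> - {c..d}) (nhds x)"
      by (intro eventually_nhds_in_open) auto
    then have "eventually (\<lambda>y. ?q y = 0) (nhds x)"
      by eventually_elim auto
    then have "isCont ?q x \<longleftrightarrow> isCont (\<lambda>_. 0 :: real) x"
      by (rule isCont_cong)
    then show ?thesis
      by (simp only: continuous_const)
  qed
  then have "continuous_on ({a..b} - {c, d}) ?q"
    by (intro continuous_at_imp_continuous_on) auto
  then show ?thesis
    unfolding piecewise_continuous_on_def
    using bump_has_left_limit[OF h] bump_has_right_limit[OF h]
    by (intro conjI exI[of _ "{c, d}"]) auto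
qed

lemma piecewise_continuous_on_zero: "piecewise_continuous_on a b (\<lambda>_. 0)"
  unfolding piecewise_continuous_on_def
  by (intro conjI exI[of _ "{}"] ballI impI exI[of _ 0]) auto

lemma is_solution_onI:
  assumes "\<And>t. t \<in> {a..b} \<Longrightarrow> (u has_real_derivative u' t) (at t)"
    and "continuous_on {a..b} u'"
    and "finite S"
    and "\<And>t. t \<in> {a..b} - S \<Longrightarrow> (u' has_real_derivative - q t * u t) (at t)"
    and "t0 \<in> {a..b}" "u t0 \<noteq> 0"
  shows "is_solution_on a b q u"
  unfolding is_solution_on_def using assms
  by (intro conjI exI[of _ u'] exI[of _ S] ballI bexI[of _ t0])
    (auto intro: has_field_derivative_at_within)

lemma has_real_derivative_glue:
  fixes f g f' g' :: "real \<Rightarrow> real"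
  assumes f: "\<And>x. (f has_real_derivative f' x) (at x)"
    and g: "\<And>x. (g has_real_derivative g' x) (at x)"
    and "f c = g c" "f' c = g' c"
  shows "((\<lambda>x. if x \<le> c then f x else g x) has_real_derivative
      (if x \<le> c then f' x else g' x)) (at x)"
proof -
  have "closure {..c} \<inter> closure {c<..} = {c}"
    by auto
  then have "((\<lambda>x. if x \<in> {..c} then f x else g x) has_derivative
      (if x \<in> {..c} then (*) (f' x) else (*) (g' x))) (at x within {..c} \<union> {c<..})"
    using assms unfolding has_field_derivative_def
    by (intro has_derivative_If_within_closures) (auto intro: has_derivative_at_withinI)
  moreover have "{..c} \<union> {c<..} = (UNIV :: real set)"
    by auto
  ultimately show ?thesis
    unfolding has_field_derivative_def by (auto split: if_splits)
qed

definition huber :: "real \<Rightarrow> real \<Rightarrow> real" where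
  "huber \<delta> s = (if s \<le> -\<delta> then -s - \<delta>/2 else if s \<le> \<delta> then s\<^sup>2 / (2*\<delta>) else s - \<delta>/2)"

definition huber_deriv :: "real \<Rightarrow> real \<Rightarrow> real" where
  "huber_deriv \<delta> s = max (-1) (min 1 (s / \<delta>))"

lemma huber_eq_abs:
  assumes "0 < \<delta>" "\<delta> \<le> \<bar>s\<bar>"
  shows "huber \<delta> s = \<bar>s\<bar> - \<delta>/2"
proof -
  have "s = \<delta>" if "-\<delta> < s" "s \<le> \<delta>"
    using that assms by linarith
  then show ?thesis
    using assms by (auto simp: huber_def power2_eq_square)
qed

lemma huber_less:
  assumes "0 < \<delta>" "\<delta> < L" "\<bar>s\<bar> < L"
  shows "huber \<delta> s < L - \<delta>/2"
proof (cases "\<bar>s\<bar> \<le> \<delta>")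
  case True
  then have "s\<^sup>2 \<le> \<delta>\<^sup>2"
    using power_mono[OF True abs_ge_zero, of 2] by simp
  then have "huber \<delta> s \<le> \<delta>/2"
    using True assms by (auto simp: huber_def power2_eq_square divide_le_eq)
  then show ?thesis
    using assms by linarith
next
  case False
  then show ?thesis
    using assms by (simp add: huber_eq_abs)
qed

lemma huber_deriv_eq:
  assumes "0 < \<delta>"
  shows "huber_deriv \<delta> s = (if s \<le> -\<delta> then -1 else if s \<le> \<delta> then s / \<delta> else 1)"
  using assms by (auto simp: huber_deriv_def field_simps)

lemma huber_has_real_derivative:
  assumes "0 < \<delta>"
  shows "(huber \<delta> has_real_derivative huber_deriv \<delta> s) (at s)"
proof -
  have inner: "((\<lambda>s. if s \<le> \<delta> then s\<^sup>2 / (2*\<delta>) else s - \<delta>/2) has_real_derivative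
      (if s \<le> \<delta> then s / \<delta> else 1)) (at s)" for s
    using assms by (intro has_real_derivative_glue)
      (auto intro!: derivative_eq_intros simp: field_simps power2_eq_square)
  have "((\<lambda>s. if s \<le> -\<delta> then -s - \<delta>/2 else if s \<le> \<delta> then s\<^sup>2 / (2*\<delta>) else s - \<delta>/2)
      has_real_derivative (if s \<le> -\<delta> then -1 else if s \<le> \<delta> then s / \<delta> else 1)) (at s)"
    using assms by (intro has_real_derivative_glue inner)
      (auto intro!: derivative_eq_intros simp: field_simps power2_eq_square)
  then show ?thesis
    using assms by (simp add: huber_def[abs_def] huber_deriv_eq)
qed

lemma isCont_huber [continuous_intros]:
  assumes "0 < \<delta>" "isCont f x"
  shows "isCont (\<lambda>x. huber \<delta> (f x)) x"
  using assms(2) DERIV_isCont[OF huber_has_real_derivative[OF assms(1)]] by (rule isCont_o2)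

lemma huber_deriv_has_real_derivative:
  assumes "0 < \<delta>" "\<bar>s\<bar> \<noteq> \<delta>"
  shows "(huber_deriv \<delta> has_real_derivative (if \<bar>s\<bar> < \<delta> then 1/\<delta> else 0)) (at s)"
proof -
  consider "s < -\<delta>" | "\<bar>s\<bar> < \<delta>" | "\<delta> < s"
    using assms by linarith
  then show ?thesis
  proof cases
    case 1
    have "((\<lambda>_. -1) has_real_derivative 0) (at s)"
      by simp
    then have "(huber_deriv \<delta> has_real_derivative 0) (at s)"
      by (rule has_field_derivative_transform_within_open[where S="{..<-\<delta>}"])
        (use 1 assms in \<open>auto simp: huber_deriv_eq\<close>)
    then show ?thesis
      using 1 assms by simp
  next
    case 2
    have "((\<lambda>s. s / \<delta>) has_real_derivative 1/\<delta>) (at s)"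
      using assms by (auto intro!: derivative_eq_intros)
    then have "(huber_deriv \<delta> has_real_derivative 1/\<delta>) (at s)"
      by (rule has_field_derivative_transform_within_open[where S="{-\<delta><..<\<delta>}"])
        (use 2 assms in \<open>auto simp: huber_deriv_eq\<close>)
    then show ?thesis
      using 2 by simp
  next
    case 3
    have "((\<lambda>_. 1) has_real_derivative 0) (at s)"
      by simp
    then have "(huber_deriv \<delta> has_real_derivative 0) (at s)"
      by (rule has_field_derivative_transform_within_open[where S="{\<delta><..}"])
        (use 3 assms in \<open>auto simp: huber_deriv_eq\<close>)
    then show ?thesis
      using 3 assms by simp
  qed
qed

lemma is_solution_on_rounded_tent:
  fixes m L \<delta> :: real
  assumes "0 < \<delta>" "\<delta> < L"
  defines "u \<equiv> \<lambda>t. L - \<delta>/2 - huber \<delta> (t - m)"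
  shows "is_solution_on (m - L) (m + L) (\<lambda>t. if t \<in> {m - \<delta>..m + \<delta>} then 1 / (\<delta> * u t) else 0) u"
proof (rule is_solution_onI)
  show "(u has_real_derivative - huber_deriv \<delta> (t - m)) (at t)" for t
  proof -
    have "((\<lambda>t. huber \<delta> (t - m)) has_real_derivative huber_deriv \<delta> (t - m) * 1) (at t)"
      by (rule DERIV_chain2[OF huber_has_real_derivative[OF \<open>0 < \<delta>\<close>]])
        (auto intro!: derivative_eq_intros)
    then show ?thesis
      unfolding u_def using DERIV_diff[OF DERIV_const[of "L - \<delta>/2"]] by simp
  qed
  show "continuous_on {m - L..m + L} (\<lambda>t. - huber_deriv \<delta> (t - m))"
    unfolding huber_deriv_def using assms by (intro continuous_intros) auto
  show "finite {m - \<delta>, m + \<delta>}"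
    by simp
  show "((\<lambda>t. - huber_deriv \<delta> (t - m)) has_real_derivative
      - (if t \<in> {m - \<delta>..m + \<delta>} then 1 / (\<delta> * u t) else 0) * u t) (at t)"
    if "t \<in> {m - L..m + L} - {m - \<delta>, m + \<delta>}" for t
  proof -
    have "\<bar>t - m\<bar> \<noteq> \<delta>"
      using that by auto
    then have "((\<lambda>t. huber_deriv \<delta> (t - m)) has_real_derivative
        (if \<bar>t - m\<bar> < \<delta> then 1/\<delta> else 0) * 1) (at t)"
      by (intro DERIV_chain2[of "huber_deriv \<delta>" _ "\<lambda>t. t - m" t] huber_deriv_has_real_derivative \<open>0 < \<delta>\<close>)
        (auto intro!: derivative_eq_intros)
    then have "((\<lambda>t. - huber_deriv \<delta> (t - m)) has_real_derivative
        - (if \<bar>t - m\<bar> < \<delta> then 1/\<delta> else 0)) (at t)"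
      using DERIV_minus by fastforce
    moreover have "u t \<noteq> 0" if "\<bar>t - m\<bar> < \<delta>"
      using huber_less[of \<delta> L "t - m"] that assms by (simp add: u_def)
    ultimately show ?thesis
      using that \<open>0 < \<delta>\<close> by (auto simp: abs_less_iff)
  qed
  show "m \<in> {m - L..m + L}"
    using assms by simp
  show "u m \<noteq> 0"
    using assms by (simp add: u_def huber_def)
qed

lemma sturm_comparison_counterexample:
  fixes a b \<epsilon> :: real
  assumes "0 < \<epsilon>" "\<epsilon> < b - a"
  shows "\<exists>q1 q2 c d. piecewise_continuous_on a b q1 \<and> piecewise_continuous_on a b q2 \<and>
           a < c \<and> d < b \<and> d - c = \<epsilon> \<and>
           (\<forall>t\<in>{a..b} - {c..d}. q1 t \<le> q2 t) \<and>
           (\<forall>t\<in>{c..d}. q1 t > q2 t) \<and>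
           (\<exists>u. is_solution_on a b q1 u \<and> u a = 0 \<and> u b = 0 \<and> (\<forall>t\<in>{a<..<b}. u t \<noteq> 0)) \<and>
           (\<exists>v. is_solution_on a b q2 v \<and> (\<forall>t\<in>{a..b}. v t \<noteq> 0))"
proof -
  define m L \<delta> where "m = (a + b) / 2" and "L = (b - a) / 2" and "\<delta> = \<epsilon> / 2"
  define u where "u = (\<lambda>t. L - \<delta>/2 - huber \<delta> (t - m))"
  define q where "q = (\<lambda>t. if t \<in> {m - \<delta>..m + \<delta>} then 1 / (\<delta> * u t) else 0)"
  have \<delta>: "0 < \<delta>" "\<delta> < L" and ab: "a = m - L" "b = m + L"
    using assms by (auto simp: m_def L_def \<delta>_def field_simps)
  have u_pos: "0 < u t" if "t \<in> {a<..<b}" for t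
    using huber_less[OF \<delta>, of "t - m"] that by (auto simp: u_def ab)
  have cd: "a < m - \<delta>" "m + \<delta> < b" "(m + \<delta>) - (m - \<delta>) = \<epsilon>"
    using \<delta> by (auto simp: ab \<delta>_def)
  have q_pos: "\<forall>t\<in>{m - \<delta>..m + \<delta>}. 0 < q t"
    using u_pos cd \<delta> by (auto simp: q_def)
  have q_nonpos: "\<forall>t\<in>{a..b} - {m - \<delta>..m + \<delta>}. q t \<le> 0"
    by (auto simp: q_def)
  have "isCont (\<lambda>t. 1 / (\<delta> * u t)) t" if "t \<in> {m - \<delta>..m + \<delta>}" for t
    using u_pos[of t] that cd \<delta> unfolding u_def by (intro continuous_intros) auto
  then have "piecewise_continuous_on a b q"
    unfolding q_def by (rule piecewise_continuous_on_bump)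
  moreover have "is_solution_on a b q u"
    unfolding ab q_def u_def using is_solution_on_rounded_tent[OF \<delta>] .
  moreover have "u a = 0" "u b = 0"
    using \<delta> by (simp_all add: u_def ab huber_eq_abs)
  moreover have "\<forall>t\<in>{a<..<b}. u t \<noteq> 0"
    using u_pos by (simp add: order_less_imp_not_eq2)
  moreover have "\<exists>v. is_solution_on a b (\<lambda>_. 0) v \<and> (\<forall>t\<in>{a..b}. v t \<noteq> 0)"
    using assms by (intro exI[of _ "\<lambda>_. 1"] conjI is_solution_onI[of _ _ _ "\<lambda>_. 0" "{}"]) auto
  ultimately show ?thesis
    using cd q_pos q_nonpos piecewise_continuous_on_zero
    by (intro exI[of _ q] exI[of _ "\<lambda>_. 0"] exI[of _ "m - \<delta>"] exI[of _ "m + \<delta>"]) blast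
qed

theorem theorem1:
  fixes a b :: real
  assumes "a < b"
  shows "\<exists>\<epsilon>0>0. \<forall>\<epsilon>. 0 < \<epsilon> \<and> \<epsilon> < \<epsilon>0 \<longrightarrow>
           (\<exists>q1 q2 c d. piecewise_continuous_on a b q1 \<and> piecewise_continuous_on a b q2 \<and>
              a < c \<and> d < b \<and> d - c = \<epsilon> \<and>
              (\<forall>t\<in>{a..b} - {c..d}. q1 t \<le> q2 t) \<and>
              (\<forall>t\<in>{c..d}. q1 t > q2 t) \<and>
              (\<exists>u. is_solution_on a b q1 u \<and> u a = 0 \<and> u b = 0 \<and>
                   (\<forall>t\<in>{a<..<b}. u t \<noteq> 0)) \<and>
              (\<exists>v. is_solution_on a b q2 v \<and> (\<forall>t\<in>{a..b}. v t \<noteq> 0)))"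
  using assms by (intro exI[of _ "b - a"] conjI allI impI sturm_comparison_counterexample) auto

end
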